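(* Let $P_d$ be the left path on $d$ vertices (each vertex except the last is the parent of the next via a left-child edge), with all edges contiguous, and let $x,x'$ be two distinct vertices of $P_d$. Let $(P,e)$ be any tree pattern, and let $Q$ and $Q'$ be the tree patterns obtained from $(P_d,1\cdots1)$ by attaching $(P,e)$ as the right subtree of $x$, respectively of $x'$, via a non-contiguous edge. Then $Q$ and $Q'$ are Wilf-equivalent.
   Context: $\mathcal{T}_n$ is the set of binary trees on $n$ vertices labeled $1,\dots,n$ by the search tree property (labels of a combined tree are reassigned by this property). $c_L,c_R,p$: left child, right child, parent. A tree pattern is $(P,e)$, $P\in\mathcal{T}_k$, $e\colon[k]\setminus\{\text{root}\}\to\{0,1\}$; the edge $(i,p(i))$ is contiguous if $e(i)=1$, non-contiguous if $e(i)=0$. $T\in\mathcal{T}_n$ contains $(P,e)$ if there is an injection $f\colon[k]\to[n]$ such that for every non-root $i$ of $P$: if $e(i)=1$, $f(i)$ is the left (resp. right) child of $f(p(i))$ when $i$ is the left (resp. right) child of $p(i)$; if $e(i)=0$, $f(i)$ lies in the left (resp. right) subtree of $f(p(i))$. $\mathcal{T}_n(Q)$ is the set of avoiders of $Q$. $Q,Q'$ are Wilf-equivalent if $|\mathcal{T}_n(Q)|=|\mathcal{T}_n(Q')|$ for all $n\ge0$. *)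

theory Defs
  imports Main
begin

text \<open>Since labels of a tree in T_n are determined by the
search tree property, a tree in T_n is the same as a binary tree shape with n vertices.
Vertices are addressed by positions: lists of directions, False = left, True = right.\<close>

datatype tree = Leaf | Node tree tree

fun tsize :: "tree \<Rightarrow> nat" where
  "tsize Leaf = 0"
| "tsize (Node l r) = Suc (tsize l + tsize r)"

fun tpos :: "tree \<Rightarrow> bool list set" where
  "tpos Leaf = {}"
| "tpos (Node l r) = {[]} \<union> Cons False ` tpos l \<union> Cons True ` tpos r"

text \<open>Tree patterns (P,e): a nonempty binary tree in which each child edge carries
a flag: True = contiguous (e = 1), False = non-contiguous (e = 0).\<close>

datatype pat = PN "(bool \<times> pat) option" "(bool \<times> pat) option"

fun ppos :: "pat \<Rightarrow> bool list set" where
  "ppos (PN l r) = {[]}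
     \<union> (case l of None \<Rightarrow> {} | Some (c, p) \<Rightarrow> Cons False ` ppos p)
     \<union> (case r of None \<Rightarrow> {} | Some (c, p) \<Rightarrow> Cons True ` ppos p)"

text \<open>Contiguity flag e(i) of the edge from the (non-root) vertex at position w to its parent.\<close>
fun pedge :: "pat \<Rightarrow> bool list \<Rightarrow> bool" where
  "pedge (PN l r) [] = False"
| "pedge (PN l r) (b # w) =
     (case (if b then r else l) of
        None \<Rightarrow> False
      | Some (c, p) \<Rightarrow> (if w = [] then c else pedge p w))"

definition contains :: "tree \<Rightarrow> pat \<Rightarrow> bool" where
  "contains T Q \<longleftrightarrow> (\<exists>f. inj_on f (ppos Q) \<and> f ` ppos Q \<subseteq> tpos T \<and>
     (\<forall>w b. w @ [b] \<in> ppos Q \<longrightarrow>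
        (if pedge Q (w @ [b]) then f (w @ [b]) = f w @ [b]
         else (\<exists>u. f (w @ [b]) = f w @ [b] @ u))))"

definition avoiders :: "nat \<Rightarrow> pat \<Rightarrow> tree set" where
  "avoiders n Q = {T. tsize T = n \<and> \<not> contains T Q}"

definition wilf_equiv :: "pat \<Rightarrow> pat \<Rightarrow> bool" where
  "wilf_equiv Q Q' \<longleftrightarrow> (\<forall>n. card (avoiders n Q) = card (avoiders n Q'))"

text \<open>lpa m a P: the left path with m+1 vertices (depth 0..m), all edges contiguous;
if a = Some i, the pattern P is attached as right subtree of the vertex at depth i
via a non-contiguous edge.\<close>
fun lpa :: "nat \<Rightarrow> nat option \<Rightarrow> pat \<Rightarrow> pat" where
  "lpa 0 a P = PN None (if a = Some 0 then Some (False, P) else None)"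
| "lpa (Suc m) a P =
     PN (Some (True, lpa m (case a of Some (Suc j) \<Rightarrow> Some j | _ \<Rightarrow> None) P))
        (if a = Some 0 then Some (False, P) else None)"

end

theory Submission
  imports Defs
begin

text \<open>Cut a tree along its left spine into the list \<open>Rs\<close> of right subtrees hanging off it.
  A copy of the left path with \<open>D + 1\<close> vertices carrying \<open>P\<close> at depth \<open>i\<close> either lies inside
  one of these subtrees, or occupies \<open>D + 1\<close> consecutive spine vertices and puts \<open>P\<close> into the
  subtree hanging off the one at depth \<open>i\<close>. So a tree avoids the pattern iff every member of
  \<open>Rs\<close> avoids it and the members at the positions \<open>i, \<dots>, length Rs - 1 - (D - i)\<close> also avoid
  \<open>P\<close>: only the location of this window depends on \<open>i\<close>. As the pattern contains \<open>P\<close>, avoiding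
  \<open>P\<close> implies avoiding the pattern for every \<open>i\<close>. If at all smaller sizes there are at most as
  many avoiders for \<open>i\<close> as for \<open>j\<close>, there is a size-preserving injection between the smaller
  avoiders that keeps avoiders of \<open>P\<close> avoiding \<open>P\<close>; applying it to every member of \<open>Rs\<close> and
  rotating \<open>Rs\<close> by \<open>j - i\<close> injects the avoiders for \<open>i\<close> into those for \<open>j\<close>. Induction on the
  size and symmetry give equality.\<close>

lemma Nil_in_ppos [simp]: "[] \<in> ppos Q"
  by (cases Q) auto

lemma Cons_in_ppos:
  "b # w \<in> ppos (PN l r) \<longleftrightarrow> (\<exists>c q. (if b then r else l) = Some (c, q) \<and> w \<in> ppos q)"
  by (cases b; cases l; cases r) auto

lemma ppos_prefix: "w @ v \<in> ppos Q \<Longrightarrow> w \<in> ppos Q"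
proof (induction w arbitrary: Q)
  case (Cons b w)
  obtain l r where Q: "Q = PN l r" by (cases Q)
  then obtain c q where "(if b then r else l) = Some (c, q)" "w @ v \<in> ppos q"
    using Cons.prems Cons_in_ppos[of b "w @ v" l r] by auto
  then show ?case using Cons.IH Q Cons_in_ppos[of b w l r] by blast
qed simp

lemma pedge_Cons:
  "(if b then r else l) = Some (c, q) \<Longrightarrow> pedge (PN l r) (b # w) = (if w = [] then c else pedge q w)"
  by (cases b) auto

lemma Cons_in_tpos: "b # u \<in> tpos (Node L R) \<longleftrightarrow> u \<in> tpos (if b then R else L)"
  by (cases b) auto

definition edge_image :: "bool \<Rightarrow> bool \<Rightarrow> bool list \<Rightarrow> bool list \<Rightarrow> bool" where
  "edge_image c b x y \<longleftrightarrow> (if c then y = x @ [b] else (\<exists>u. y = x @ [b] @ u))"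

lemma edge_image_Cons [simp]: "edge_image c b (a # x) (a # y) \<longleftrightarrow> edge_image c b x y"
  by (simp add: edge_image_def)

lemma edge_image_imp_extends: "edge_image c b x y \<Longrightarrow> \<exists>u. y = x @ b # u"
  by (cases c) (auto simp: edge_image_def)

definition respects_edges :: "pat \<Rightarrow> (bool list \<Rightarrow> bool list) \<Rightarrow> bool" where
  "respects_edges Q f \<longleftrightarrow>
     (\<forall>w b. w @ [b] \<in> ppos Q \<longrightarrow> edge_image (pedge Q (w @ [b])) b (f w) (f (w @ [b])))"

lemma contains_iff_respects_edges:
  "contains T Q \<longleftrightarrow> (\<exists>f. inj_on f (ppos Q) \<and> f ` ppos Q \<subseteq> tpos T \<and> respects_edges Q f)"
  by (simp add: contains_def respects_edges_def edge_image_def)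

lemma respects_edges_Cons_iff: "respects_edges Q (\<lambda>w. a # f w) \<longleftrightarrow> respects_edges Q f"
  by (simp add: respects_edges_def)

lemma respects_edges_cong:
  "(\<And>w. w \<in> ppos Q \<Longrightarrow> f w = g w) \<Longrightarrow> respects_edges Q f \<longleftrightarrow> respects_edges Q g"
  unfolding respects_edges_def by (metis ppos_prefix)

lemma respects_edges_child:
  assumes resp: "respects_edges (PN l r) f" and child: "(if b then r else l) = Some (c, q)"
  shows "edge_image c b (f []) (f [b]) \<and> respects_edges q (\<lambda>w. f (b # w))"
proof
  have "[] @ [b] \<in> ppos (PN l r)"
    using child by (subst append_Nil, subst Cons_in_ppos) auto
  then show "edge_image c b (f []) (f [b])"
    using resp pedge_Cons[OF child, of "[]"] unfolding respects_edges_def by fastforce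
  show "respects_edges q (\<lambda>w. f (b # w))"
    unfolding respects_edges_def
  proof (intro allI impI)
    fix w b' assume "w @ [b'] \<in> ppos q"
    then have "(b # w) @ [b'] \<in> ppos (PN l r)"
      using child by (subst append_Cons, subst Cons_in_ppos) auto
    then show "edge_image (pedge q (w @ [b'])) b' (f (b # w)) (f (b # w @ [b']))"
      using resp pedge_Cons[OF child, of "w @ [b']"] unfolding respects_edges_def by fastforce
  qed
qed

lemma respects_edges_PN:
  "respects_edges (PN l r) f \<longleftrightarrow>
     (\<forall>b c q. (if b then r else l) = Some (c, q) \<longrightarrow>
        edge_image c b (f []) (f [b]) \<and> respects_edges q (\<lambda>w. f (b # w)))"
  (is "?lhs \<longleftrightarrow> ?rhs")
proof
  show "?lhs \<Longrightarrow> ?rhs" using respects_edges_child by blast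
next
  assume ?rhs
  show ?lhs
    unfolding respects_edges_def
  proof (intro allI impI)
    fix w b' assume w: "w @ [b'] \<in> ppos (PN l r)"
    show "edge_image (pedge (PN l r) (w @ [b'])) b' (f w) (f (w @ [b']))"
    proof (cases w)
      case Nil
      then obtain c q where child: "(if b' then r else l) = Some (c, q)"
        using w Cons_in_ppos[of b' "[]"] by auto
      then show ?thesis
        using \<open>?rhs\<close> pedge_Cons[OF child, of "[]"] Nil by simp
    next
      case (Cons b w')
      then obtain c q where child: "(if b then r else l) = Some (c, q)" and "w' @ [b'] \<in> ppos q"
        using w Cons_in_ppos[of b "w' @ [b']"] by auto
      then show ?thesis
        using \<open>?rhs\<close> pedge_Cons[OF child, of "w' @ [b']"] Cons
        unfolding respects_edges_def by fastforce
    qed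
  qed
qed

lemma respects_edges_descends:
  assumes "respects_edges Q f" and "w @ b # v \<in> ppos Q"
  shows "\<exists>u. f (w @ b # v) = f w @ b # u"
  using assms(2)
proof (induction v rule: rev_induct)
  case Nil
  then have "edge_image (pedge Q (w @ [b])) b (f w) (f (w @ [b]))"
    using assms(1) unfolding respects_edges_def by simp
  then show ?case by (simp add: edge_image_imp_extends)
next
  case (snoc a v)
  then obtain u where "f (w @ b # v) = f w @ b # u"
    using ppos_prefix[of "w @ b # v" "[a]"] by auto
  moreover have "(w @ b # v) @ [a] \<in> ppos Q" using snoc.prems by simp
  then obtain u' where "f ((w @ b # v) @ [a]) = f (w @ b # v) @ a # u'"
    using assms(1) edge_image_imp_extends unfolding respects_edges_def by blast
  ultimately show ?case by auto
qed

lemma respects_edges_below_root: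
  assumes "respects_edges Q f" and "w \<in> ppos Q"
  shows "\<exists>u. f w = f [] @ u"
proof (cases w)
  case (Cons b v)
  then show ?thesis using respects_edges_descends[OF assms(1), of "[]" b v] assms(2) by auto
qed simp

text \<open>Injectivity of an embedding comes for free: a descendant is mapped strictly below,
  and the two branches at a fork are mapped into different subtrees.\<close>
lemma respects_edges_inj_on:
  assumes "respects_edges Q f"
  shows "inj_on f (ppos Q)"
proof (rule inj_onI)
  fix x y assume x: "x \<in> ppos Q" and y: "y \<in> ppos Q" and eq: "f x = f y"
  have moves_down: "f (p @ b # v) \<noteq> f p" if pos: "p @ b # v \<in> ppos Q" for p b v
  proof -
    obtain u where "f (p @ b # v) = f p @ b # u"
      using respects_edges_descends[OF assms pos] by blast
    then show ?thesis by simp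
  qed
  obtain p x' y' where xp: "x = p @ x'" and yp: "y = p @ y'"
    and fork: "x' = [] \<or> y' = [] \<or> hd x' \<noteq> hd y'"
    using longest_common_prefix by blast
  show "x = y"
  proof (cases x')
    case Nil
    show ?thesis
    proof (cases y')
      case (Cons c cs)
      then show ?thesis using moves_down[of p c cs] y eq xp yp Nil by simp
    qed (use xp yp Nil in simp)
  next
    case (Cons b bs)
    show ?thesis
    proof (cases y')
      case Nil
      then show ?thesis using moves_down[of p b bs] x eq xp yp Cons by simp
    next
      case (Cons c cs)
      with fork \<open>x' = b # bs\<close> have "b \<noteq> c" by simp
      obtain u where "f x = f p @ b # u"
        using respects_edges_descends[OF assms] x xp \<open>x' = b # bs\<close> by blast
      moreover obtain u' where "f y = f p @ c # u'"
        using respects_edges_descends[OF assms] y yp Cons by blast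
      ultimately show ?thesis using eq \<open>b \<noteq> c\<close> by simp
    qed
  qed
qed

lemma respects_edges_into_subtree:
  assumes "respects_edges Q f" and "f ` ppos Q \<subseteq> tpos (Node L R)"
    and "\<And>w. w \<in> ppos Q \<Longrightarrow> \<exists>u. f w = b # u"
  shows "respects_edges Q (\<lambda>w. tl (f w)) \<and> (\<lambda>w. tl (f w)) ` ppos Q \<subseteq> tpos (if b then R else L)"
proof
  have headed: "f w = b # tl (f w)" if "w \<in> ppos Q" for w
    using assms(3)[OF that] by auto
  have "respects_edges Q (\<lambda>w. b # tl (f w)) \<longleftrightarrow> respects_edges Q f"
    by (rule respects_edges_cong) (use headed in simp)
  then show "respects_edges Q (\<lambda>w. tl (f w))"
    using assms(1) respects_edges_Cons_iff by blast
  show "(\<lambda>w. tl (f w)) ` ppos Q \<subseteq> tpos (if b then R else L)"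
  proof
    fix x assume "x \<in> (\<lambda>w. tl (f w)) ` ppos Q"
    then obtain w where "w \<in> ppos Q" and x: "x = tl (f w)" by blast
    then have "f w \<in> tpos (Node L R)" using assms(2) by blast
    then have "b # tl (f w) \<in> tpos (Node L R)" using headed \<open>w \<in> ppos Q\<close> by simp
    then show "x \<in> tpos (if b then R else L)" using x Cons_in_tpos by blast
  qed
qed

text \<open>The flag tells whether the root of the pattern must go to the root of the tree.\<close>
definition embeds :: "bool \<Rightarrow> tree \<Rightarrow> pat \<Rightarrow> bool" where
  "embeds rooted T Q \<longleftrightarrow> (\<exists>f. (rooted \<longrightarrow> f [] = []) \<and> f ` ppos Q \<subseteq> tpos T \<and> respects_edges Q f)"

lemma contains_iff_embeds: "contains T Q \<longleftrightarrow> embeds False T Q"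
  unfolding contains_iff_respects_edges embeds_def using respects_edges_inj_on by blast

lemma embeds_Leaf [simp]: "\<not> embeds rooted Leaf Q"
proof
  assume "embeds rooted Leaf Q"
  then obtain f where "f ` ppos Q \<subseteq> tpos Leaf" unfolding embeds_def by blast
  then have "f [] \<in> tpos Leaf" using Nil_in_ppos[of Q] by blast
  then show False by simp
qed

lemma embeds_rooted_imp_embeds: "embeds True T Q \<Longrightarrow> embeds rooted T Q"
  by (auto simp: embeds_def)

lemma embeds_child_if_embeds_rooted_Node:
  assumes "embeds True (Node L R) (PN l r)" and child: "(if b then r else l) = Some (c, q)"
  shows "embeds c (if b then R else L) q"
proof -
  obtain f where root: "f [] = []" and img: "f ` ppos (PN l r) \<subseteq> tpos (Node L R)"
    and resp: "respects_edges (PN l r) f"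
    using assms(1) unfolding embeds_def by blast
  have edge: "edge_image c b [] (f [b])" and resp_q: "respects_edges q (\<lambda>w. f (b # w))"
    using respects_edges_child[OF resp child] root by auto
  have pos: "b # w \<in> ppos (PN l r)" if "w \<in> ppos q" for w
    using child that Cons_in_ppos by blast
  have "\<exists>u. f (b # w) = b # u" if "w \<in> ppos q" for w
    using respects_edges_descends[OF resp, of "[]" b w] pos[OF that] root by simp
  moreover have "(\<lambda>w. f (b # w)) ` ppos q \<subseteq> tpos (Node L R)"
    using img pos by blast
  moreover define g where "g w = tl (f (b # w))" for w
  ultimately have "respects_edges q g" and "g ` ppos q \<subseteq> tpos (if b then R else L)"
    using respects_edges_into_subtree[OF resp_q] unfolding g_def by blast+
  moreover have "c \<longrightarrow> g [] = []"
    using edge by (simp add: g_def edge_image_def)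
  ultimately show ?thesis
    unfolding embeds_def by blast
qed

lemma embeds_rooted_Node_if_embeds_children:
  assumes "\<And>b c q. (if b then r else l) = Some (c, q) \<Longrightarrow> embeds c (if b then R else L) q"
  shows "embeds True (Node L R) (PN l r)"
proof -
  have "\<exists>g. \<forall>c q. (if b then r else l) = Some (c, q) \<longrightarrow>
      (c \<longrightarrow> g [] = []) \<and> g ` ppos q \<subseteq> tpos (if b then R else L) \<and> respects_edges q g" for b
  proof (cases "if b then r else l")
    case (Some cq)
    then obtain c q where child: "(if b then r else l) = Some (c, q)" by (cases cq) simp
    then obtain g where "(c \<longrightarrow> g [] = []) \<and> g ` ppos q \<subseteq> tpos (if b then R else L) \<and> respects_edges q g"
      using assms unfolding embeds_def by blast
    then show ?thesis using child by (intro exI[of _ g]) simp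
  qed simp
  then obtain G where G: "\<And>b c q. (if b then r else l) = Some (c, q) \<Longrightarrow>
      (c \<longrightarrow> G b [] = []) \<and> G b ` ppos q \<subseteq> tpos (if b then R else L) \<and> respects_edges q (G b)"
    by metis
  define f where "f w = (case w of [] \<Rightarrow> [] | b # w' \<Rightarrow> b # G b w')" for w
  have "respects_edges (PN l r) f"
    unfolding respects_edges_PN
  proof (intro allI impI conjI)
    fix b c q assume child: "(if b then r else l) = Some (c, q)"
    show "edge_image c b (f []) (f [b])"
      using G[OF child] by (auto simp: f_def edge_image_def)
    show "respects_edges q (\<lambda>w. f (b # w))"
      using G[OF child] by (simp add: f_def respects_edges_Cons_iff)
  qed
  moreover have "f ` ppos (PN l r) \<subseteq> tpos (Node L R)"
  proof
    fix x assume "x \<in> f ` ppos (PN l r)"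
    then obtain w where w: "w \<in> ppos (PN l r)" and x: "x = f w" by blast
    show "x \<in> tpos (Node L R)"
    proof (cases w)
      case (Cons b w')
      then obtain c q where child: "(if b then r else l) = Some (c, q)" and "w' \<in> ppos q"
        using w Cons_in_ppos by blast
      then have "G b w' \<in> tpos (if b then R else L)" using G[OF child] by blast
      then show ?thesis using x Cons Cons_in_tpos by (simp add: f_def)
    qed (simp add: x f_def)
  qed
  moreover have "f [] = []" by (simp add: f_def)
  ultimately show ?thesis unfolding embeds_def by blast
qed

lemma embeds_rooted_Node:
  "embeds True (Node L R) (PN l r) \<longleftrightarrow>
     (\<forall>b c q. (if b then r else l) = Some (c, q) \<longrightarrow> embeds c (if b then R else L) q)"
  using embeds_child_if_embeds_rooted_Node embeds_rooted_Node_if_embeds_children by blast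

lemma contains_Node_if_contains_child:
  assumes "contains (if b then R else L) Q"
  shows "contains (Node L R) Q"
proof -
  obtain g where img: "g ` ppos Q \<subseteq> tpos (if b then R else L)" and resp: "respects_edges Q g"
    using assms unfolding contains_iff_embeds embeds_def by blast
  have "(\<lambda>w. b # g w) ` ppos Q \<subseteq> tpos (Node L R)"
    using img Cons_in_tpos by blast
  then show ?thesis
    using resp respects_edges_Cons_iff unfolding contains_iff_embeds embeds_def by blast
qed

lemma contains_Node:
  "contains (Node L R) Q \<longleftrightarrow> embeds True (Node L R) Q \<or> contains L Q \<or> contains R Q"
proof
  assume "contains (Node L R) Q"
  then obtain f where img: "f ` ppos Q \<subseteq> tpos (Node L R)" and resp: "respects_edges Q f"
    unfolding contains_iff_embeds embeds_def by blast
  show "embeds True (Node L R) Q \<or> contains L Q \<or> contains R Q"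
  proof (cases "f []")
    case Nil
    then show ?thesis using img resp unfolding embeds_def by blast
  next
    case (Cons b u)
    then have "\<exists>u. f w = b # u" if "w \<in> ppos Q" for w
      using respects_edges_below_root[OF resp that] by auto
    moreover define g where "g w = tl (f w)" for w
    ultimately have "respects_edges Q g" and "g ` ppos Q \<subseteq> tpos (if b then R else L)"
      using respects_edges_into_subtree[OF resp img] unfolding g_def by blast+
    then have "contains (if b then R else L) Q"
      unfolding contains_iff_embeds embeds_def by blast
    then show ?thesis by (cases b) auto
  qed
next
  assume "embeds True (Node L R) Q \<or> contains L Q \<or> contains R Q"
  then show "contains (Node L R) Q"
    using embeds_rooted_imp_embeds contains_Node_if_contains_child[of False R L Q]
      contains_Node_if_contains_child[of True R L Q]
    unfolding contains_iff_embeds by auto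
qed

fun spine :: "tree list \<Rightarrow> tree" where
  "spine [] = Leaf"
| "spine (R # Rs) = Node (spine Rs) R"

fun unspine :: "tree \<Rightarrow> tree list" where
  "unspine Leaf = []"
| "unspine (Node L R) = R # unspine L"

lemma spine_unspine [simp]: "spine (unspine T) = T"
  by (induction T) auto

lemma unspine_spine [simp]: "unspine (spine Rs) = Rs"
  by (induction Rs) auto

lemma tsize_spine: "tsize (spine Rs) = length Rs + sum_list (map tsize Rs)"
  by (induction Rs) auto

lemma tsize_less_if_mem_unspine: "R \<in> set (unspine T) \<Longrightarrow> tsize R < tsize T"
  by (induction T) auto

lemma contains_spine:
  "contains (spine Rs) Q \<longleftrightarrow>
     (\<exists>R\<in>set Rs. contains R Q) \<or> (\<exists>k<length Rs. embeds True (spine (drop k Rs)) Q)"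
proof (induction Rs)
  case Nil
  then show ?case by (simp add: contains_iff_embeds)
next
  case (Cons R Rs)
  then show ?case by (auto simp: contains_Node less_Suc_eq_0_disj)
qed

lemma embeds_rooted_spine_lpa_None:
  "embeds True (spine Rs) (lpa m None P) \<longleftrightarrow> m < length Rs"
proof (induction m arbitrary: Rs)
  case 0
  then show ?case by (cases Rs) (auto simp: embeds_rooted_Node)
next
  case (Suc m)
  then show ?case by (cases Rs) (auto simp: embeds_rooted_Node all_bool_eq)
qed

lemma embeds_rooted_spine_lpa_Some:
  "i \<le> m \<Longrightarrow> embeds True (spine Rs) (lpa m (Some i) P) \<longleftrightarrow> m < length Rs \<and> contains (Rs ! i) P"
proof (induction m arbitrary: i Rs)
  case 0
  then show ?case
    by (cases Rs) (auto simp: embeds_rooted_Node all_bool_eq contains_iff_embeds)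
next
  case (Suc m)
  then show ?case
    by (cases Rs; cases i)
      (auto simp: embeds_rooted_Node all_bool_eq contains_iff_embeds embeds_rooted_spine_lpa_None)
qed

text \<open>A copy of \<open>lpa D (Some i) P\<close> whose path starts at the spine vertex \<open>k - i\<close> needs
  \<open>D\<close> more spine vertices below it and a copy of \<open>P\<close> in the \<open>k\<close>-th right subtree.\<close>
lemma contains_spine_lpa:
  assumes "i \<le> D"
  shows "contains (spine Rs) (lpa D (Some i) P) \<longleftrightarrow>
    (\<exists>R\<in>set Rs. contains R (lpa D (Some i) P)) \<or>
    (\<exists>k. i \<le> k \<and> k + (D - i) < length Rs \<and> contains (Rs ! k) P)"
proof -
  have "(\<exists>k<length Rs. embeds True (spine (drop k Rs)) (lpa D (Some i) P)) \<longleftrightarrow>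
      (\<exists>k. i \<le> k \<and> k + (D - i) < length Rs \<and> contains (Rs ! k) P)"
  proof
    assume "\<exists>k<length Rs. embeds True (spine (drop k Rs)) (lpa D (Some i) P)"
    then obtain k where "D < length Rs - k" and "contains (Rs ! (k + i)) P"
      using embeds_rooted_spine_lpa_Some[OF assms] by (auto simp: add.commute)
    then show "\<exists>k. i \<le> k \<and> k + (D - i) < length Rs \<and> contains (Rs ! k) P"
      using assms by (intro exI[of _ "k + i"]) auto
  next
    assume "\<exists>k. i \<le> k \<and> k + (D - i) < length Rs \<and> contains (Rs ! k) P"
    then obtain k where "i \<le> k" "k + (D - i) < length Rs" "contains (Rs ! k) P" by blast
    then show "\<exists>k<length Rs. embeds True (spine (drop k Rs)) (lpa D (Some i) P)"
      using assms embeds_rooted_spine_lpa_Some[OF assms, of "drop (k - i) Rs"]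
      by (intro exI[of _ "k - i"]) auto
  qed
  then show ?thesis by (simp add: contains_spine)
qed

lemma contains_lpa_imp_contains:
  assumes "i \<le> D"
  shows "contains T (lpa D (Some i) P) \<Longrightarrow> contains T P"
proof (induction T)
  case (Node L R)
  have "contains (Node L R) P" if "embeds True (Node L R) (lpa D (Some i) P)"
  proof -
    let ?Rs = "unspine (Node L R)"
    have "i < length ?Rs" and "contains (?Rs ! i) P"
      using that assms embeds_rooted_spine_lpa_Some[OF assms, of ?Rs] by auto
    then show ?thesis using contains_spine[of ?Rs] by (metis nth_mem spine_unspine)
  qed
  then show ?case using Node by (auto simp: contains_Node)
qed (simp add: contains_iff_embeds)

lemma finite_tsize_le: "finite {T. tsize T \<le> n}"
proof (induction n)
  case 0
  have "{T. tsize T \<le> 0} = {Leaf}"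
    by (auto elim: tsize.elims)
  then show ?case by simp
next
  case (Suc n)
  have "{T. tsize T \<le> Suc n} \<subseteq> insert Leaf (case_prod Node ` ({T. tsize T \<le> n} \<times> {T. tsize T \<le> n}))"
  proof
    fix T assume "T \<in> {T. tsize T \<le> Suc n}"
    then show "T \<in> insert Leaf (case_prod Node ` ({T. tsize T \<le> n} \<times> {T. tsize T \<le> n}))"
      by (cases T) auto
  qed
  then show ?case using Suc finite_subset by blast
qed

lemma finite_avoiders: "finite (avoiders n Q)"
  using finite_tsize_le[of n] by (rule finite_subset[rotated]) (auto simp: avoiders_def)

lemma nth_rotate_shift:
  assumes "j \<le> k" and "k < length xs" and "k + i - j < length xs"
  shows "rotate ((length xs + i - j) mod length xs) xs ! k = xs ! (k + i - j)"
proof -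
  have "((length xs + i - j) mod length xs + k) mod length xs = (length xs + i - j + k) mod length xs"
    by (rule mod_add_left_eq)
  also have "length xs + i - j + k = k + i - j + length xs"
    using assms(1,2) by linarith
  also have "(k + i - j + length xs) mod length xs = k + i - j"
    using assms(3) by simp
  finally show ?thesis
    using assms(2) by (simp add: nth_rotate)
qed

lemma window_rotate:
  assumes "i \<le> D" and "j \<le> D" and window: "\<And>k. i \<le> k \<Longrightarrow> k + (D - i) < length xs \<Longrightarrow> A (xs ! k)"
    and "j \<le> k" and "k + (D - j) < length xs"
  shows "A (rotate ((length xs + i - j) mod length xs) xs ! k)"
proof -
  have "i \<le> k + i - j" and "k + i - j + (D - i) < length xs"
    using assms by auto
  moreover have "rotate ((length xs + i - j) mod length xs) xs ! k = xs ! (k + i - j)"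
    using assms by (intro nth_rotate_shift) auto
  ultimately show ?thesis using window by simp
qed

lemma sum_list_rotate: "sum_list (rotate n xs) = sum_list (xs :: 'a :: comm_monoid_add list)"
  by (simp add: rotate_drop_take) (metis add.commute append_take_drop_id sum_list_append)

lemma rotate_eq_rotate_iff [simp]: "rotate n xs = rotate n ys \<longleftrightarrow> xs = ys"
  unfolding rotate_def by (rule inj_eq[OF inj_fn[OF inj_rotate1]])

lemma ex_fibrewise_inj_on:
  fixes \<kappa> :: "'a \<Rightarrow> 'k"
  assumes finite_A: "\<And>c. c \<in> C \<Longrightarrow> finite {x \<in> A. \<kappa> x = c}"
    and finite_B: "\<And>c. c \<in> C \<Longrightarrow> finite {x \<in> B. \<kappa> x = c}"
    and card_le: "\<And>c. c \<in> C \<Longrightarrow> card {x \<in> A. \<kappa> x = c} \<le> card {x \<in> B. \<kappa> x = c}"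
  obtains \<phi> where "inj_on \<phi> {x \<in> A. \<kappa> x \<in> C}"
    and "\<And>x. x \<in> A \<Longrightarrow> \<kappa> x \<in> C \<Longrightarrow> \<phi> x \<in> B \<and> \<kappa> (\<phi> x) = \<kappa> x"
proof -
  have "\<exists>g. c \<in> C \<longrightarrow> g ` {x \<in> A. \<kappa> x = c} \<subseteq> {x \<in> B. \<kappa> x = c} \<and> inj_on g {x \<in> A. \<kappa> x = c}"
    for c
  proof (cases "c \<in> C")
    case True
    from card_le_inj[OF finite_A[OF True] finite_B[OF True] card_le[OF True]] show ?thesis by blast
  qed simp
  then have "\<exists>G. \<forall>c. c \<in> C \<longrightarrow>
      G c ` {x \<in> A. \<kappa> x = c} \<subseteq> {x \<in> B. \<kappa> x = c} \<and> inj_on (G c) {x \<in> A. \<kappa> x = c}"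
    by (intro choice allI)
  then obtain G where G: "\<And>c. c \<in> C \<Longrightarrow>
      G c ` {x \<in> A. \<kappa> x = c} \<subseteq> {x \<in> B. \<kappa> x = c} \<and> inj_on (G c) {x \<in> A. \<kappa> x = c}"
    by blast
  define \<phi> where "\<phi> x = G (\<kappa> x) x" for x
  have maps: "\<phi> x \<in> B \<and> \<kappa> (\<phi> x) = \<kappa> x" if "x \<in> A" "\<kappa> x \<in> C" for x
    using G[OF that(2)] that unfolding \<phi>_def by blast
  have "inj_on \<phi> {x \<in> A. \<kappa> x \<in> C}"
  proof (rule inj_onI)
    fix x y assume x: "x \<in> {x \<in> A. \<kappa> x \<in> C}" and y: "y \<in> {x \<in> A. \<kappa> x \<in> C}" and eq: "\<phi> x = \<phi> y"
    have "\<kappa> x = \<kappa> (\<phi> x)" using maps x by simp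
    also have "\<dots> = \<kappa> y" using maps y eq by simp
    finally have same_fibre: "\<kappa> x = \<kappa> y" .
    then have "G (\<kappa> x) x = G (\<kappa> x) y" using eq unfolding \<phi>_def by simp
    then show "x = y" using G x y same_fibre by (auto dest: inj_onD)
  qed
  then show thesis using that maps by blast
qed

lemma card_avoiders_lpa:
  assumes "i \<le> D"
  shows "card (avoiders m (lpa D (Some i) P)) =
    card {T \<in> avoiders m (lpa D (Some i) P). contains T P} + card {T. tsize T = m \<and> \<not> contains T P}"
    (is "_ = card ?C + card ?N")
proof -
  have "avoiders m (lpa D (Some i) P) = ?C \<union> ?N"
    using contains_lpa_imp_contains[OF assms] by (auto simp: avoiders_def)
  then have "card (avoiders m (lpa D (Some i) P)) = card (?C \<union> ?N)"
    by (rule arg_cong)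
  also have "\<dots> = card ?C + card ?N"
  proof (rule card_Un_disjoint)
    show "finite ?C"
      by (rule finite_subset[OF _ finite_avoiders]) auto
    show "finite ?N"
      using finite_tsize_le[of m] by (rule finite_subset[rotated]) auto
  qed auto
  finally show ?thesis .
qed

text \<open>The transfer keeps the size and whether \<open>P\<close> is contained, i.e. it respects the fibres of
  \<open>\<lambda>T. (tsize T, contains T P)\<close>: those containing \<open>P\<close> are counted by the induction hypothesis,
  and the others are the same for \<open>i\<close> and \<open>j\<close>.\<close>
lemma ex_avoider_transfer:
  assumes "i \<le> D" and "j \<le> D"
    and card_le: "\<And>m. m < n \<Longrightarrow>
      card (avoiders m (lpa D (Some i) P)) \<le> card (avoiders m (lpa D (Some j) P))"
  obtains \<phi> where "inj_on \<phi> {T. tsize T < n \<and> \<not> contains T (lpa D (Some i) P)}"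
    and "\<And>T. tsize T < n \<Longrightarrow> \<not> contains T (lpa D (Some i) P) \<Longrightarrow>
      tsize (\<phi> T) = tsize T \<and> \<not> contains (\<phi> T) (lpa D (Some j) P) \<and> (contains (\<phi> T) P \<longleftrightarrow> contains T P)"
proof -
  define \<kappa> where "\<kappa> T = (tsize T, contains T P)" for T
  define A where "A k = {T. \<not> contains T (lpa D (Some k) P)}" for k
  have fibre_True: "{T \<in> A k. \<kappa> T = (m, True)} = {T \<in> avoiders m (lpa D (Some k) P). contains T P}" for k m
    by (auto simp: A_def \<kappa>_def avoiders_def)
  have fibre_False: "{T \<in> A k. \<kappa> T = (m, False)} = {T. tsize T = m \<and> \<not> contains T P}" if "k \<le> D" for k m
    using contains_lpa_imp_contains[OF that] by (auto simp: A_def \<kappa>_def)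
  have finite_fibre: "finite {T \<in> A k. \<kappa> T = c}" for k c
    using finite_tsize_le[of "fst c"] by (rule finite_subset[rotated]) (auto simp: \<kappa>_def)
  have "card {T \<in> A i. \<kappa> T = c} \<le> card {T \<in> A j. \<kappa> T = c}" if "c \<in> {c. fst c < n}" for c
  proof (cases c)
    case (Pair m b)
    then show ?thesis
      using that card_le[of m] card_avoiders_lpa[OF assms(1)] card_avoiders_lpa[OF assms(2)]
        fibre_True fibre_False[OF assms(1)] fibre_False[OF assms(2)]
      by (cases b) auto
  qed
  then obtain \<phi> where \<phi>_inj: "inj_on \<phi> {T \<in> A i. \<kappa> T \<in> {c. fst c < n}}"
    and \<phi>: "\<And>T. T \<in> A i \<Longrightarrow> \<kappa> T \<in> {c. fst c < n} \<Longrightarrow> \<phi> T \<in> A j \<and> \<kappa> (\<phi> T) = \<kappa> T"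
    using ex_fibrewise_inj_on[OF finite_fibre finite_fibre] by blast
  show thesis
  proof (rule that)
    have "{T \<in> A i. \<kappa> T \<in> {c. fst c < n}} = {T. tsize T < n \<and> \<not> contains T (lpa D (Some i) P)}"
      by (auto simp: A_def \<kappa>_def)
    then show "inj_on \<phi> {T. tsize T < n \<and> \<not> contains T (lpa D (Some i) P)}"
      using \<phi>_inj by simp
  next
    fix T assume "tsize T < n" and "\<not> contains T (lpa D (Some i) P)"
    then show "tsize (\<phi> T) = tsize T \<and> \<not> contains (\<phi> T) (lpa D (Some j) P) \<and>
      (contains (\<phi> T) P \<longleftrightarrow> contains T P)"
      using \<phi>[of T] by (auto simp: A_def \<kappa>_def)
  qed
qed

text \<open>Rotating the list of right subtrees by \<open>j - i\<close> moves the window of positions that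
  must avoid \<open>P\<close> for \<open>lpa D (Some i) P\<close> onto the one for \<open>lpa D (Some j) P\<close>.\<close>
definition rotate_subtrees :: "nat \<Rightarrow> nat \<Rightarrow> (tree \<Rightarrow> tree) \<Rightarrow> tree \<Rightarrow> tree" where
  "rotate_subtrees i j \<phi> T =
     spine (rotate ((length (unspine T) + i - j) mod length (unspine T)) (map \<phi> (unspine T)))"

lemma inj_on_rotate_subtrees:
  assumes "inj_on \<phi> S"
  shows "inj_on (rotate_subtrees i j \<phi>) {T. set (unspine T) \<subseteq> S}"
proof (rule inj_onI)
  fix T T' assume T: "T \<in> {T. set (unspine T) \<subseteq> S}" and T': "T' \<in> {T. set (unspine T) \<subseteq> S}"
    and eq: "rotate_subtrees i j \<phi> T = rotate_subtrees i j \<phi> T'"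
  let ?r = "\<lambda>T. (length (unspine T) + i - j) mod length (unspine T)"
  have rotated: "rotate (?r T) (map \<phi> (unspine T)) = rotate (?r T') (map \<phi> (unspine T'))"
    using arg_cong[OF eq, of unspine] by (simp add: rotate_subtrees_def)
  then have "length (unspine T) = length (unspine T')"
    by (metis length_map length_rotate)
  then have "map \<phi> (unspine T) = map \<phi> (unspine T')"
    using rotated by simp
  moreover have "inj_on \<phi> (set (unspine T) \<union> set (unspine T'))"
    using T T' by (intro inj_on_subset[OF assms]) auto
  ultimately show "T = T'"
    by (metis inj_on_map_eq_map spine_unspine)
qed

lemma not_contains_lpa_iff:
  assumes "i \<le> D"
  shows "\<not> contains T (lpa D (Some i) P) \<longleftrightarrow>
    (\<forall>R\<in>set (unspine T). \<not> contains R (lpa D (Some i) P)) \<and>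
    (\<forall>k. i \<le> k \<longrightarrow> k + (D - i) < length (unspine T) \<longrightarrow> \<not> contains (unspine T ! k) P)"
  using contains_spine_lpa[OF assms, of "unspine T" P] by auto

lemma rotate_subtrees_in_avoiders:
  assumes iD: "i \<le> D" and jD: "j \<le> D" and T: "T \<in> avoiders n (lpa D (Some i) P)"
    and \<phi>: "\<And>R. R \<in> set (unspine T) \<Longrightarrow>
      tsize (\<phi> R) = tsize R \<and> \<not> contains (\<phi> R) (lpa D (Some j) P) \<and> (contains (\<phi> R) P \<longleftrightarrow> contains R P)"
  shows "rotate_subtrees i j \<phi> T \<in> avoiders n (lpa D (Some j) P)"
proof -
  let ?Rs = "map \<phi> (unspine T)"
  let ?Rs' = "rotate ((length ?Rs + i - j) mod length ?Rs) ?Rs"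
  have sizes: "map tsize ?Rs = map tsize (unspine T)"
    using \<phi> by auto
  have "tsize (rotate_subtrees i j \<phi> T) = tsize T"
    unfolding rotate_subtrees_def tsize_spine rotate_map[symmetric] sum_list_rotate sizes
    using tsize_spine[of "unspine T"] by simp
  moreover have "\<not> contains (?Rs ! k) P" if "i \<le> k" "k + (D - i) < length ?Rs" for k
  proof -
    have "k < length (unspine T)" using that by simp
    moreover have "\<not> contains T (lpa D (Some i) P)"
      using T by (simp add: avoiders_def)
    then have "\<not> contains (unspine T ! k) P"
      using that not_contains_lpa_iff[OF iD, of T P] by simp
    ultimately show ?thesis
      using \<phi>[OF nth_mem] by simp
  qed
  then have "\<not> contains (?Rs' ! k) P" if "j \<le> k" "k + (D - j) < length ?Rs'" for k
    using window_rotate[OF iD jD, of ?Rs "\<lambda>R. \<not> contains R P"] that by simp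
  moreover have "\<not> contains R (lpa D (Some j) P)" if "R \<in> set ?Rs'" for R
    using that \<phi> by auto
  ultimately show ?thesis
    using T contains_spine_lpa[OF jD, of ?Rs' P] by (auto simp: avoiders_def rotate_subtrees_def)
qed

lemma card_avoiders_lpa_le:
  assumes "i \<le> D" and "j \<le> D"
  shows "card (avoiders n (lpa D (Some i) P)) \<le> card (avoiders n (lpa D (Some j) P))"
proof (induction n rule: less_induct)
  case (less n)
  let ?S = "{T. tsize T < n \<and> \<not> contains T (lpa D (Some i) P)}"
  have IH: "\<And>m. m < n \<Longrightarrow> card (avoiders m (lpa D (Some i) P)) \<le> card (avoiders m (lpa D (Some j) P))"
    by (fact less)
  obtain \<phi> where \<phi>_inj: "inj_on \<phi> ?S"
    and \<phi>: "\<And>T. tsize T < n \<Longrightarrow> \<not> contains T (lpa D (Some i) P) \<Longrightarrow>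
      tsize (\<phi> T) = tsize T \<and> \<not> contains (\<phi> T) (lpa D (Some j) P) \<and> (contains (\<phi> T) P \<longleftrightarrow> contains T P)"
    using ex_avoider_transfer[OF assms IH] by blast
  have subtrees: "set (unspine T) \<subseteq> ?S" if T: "T \<in> avoiders n (lpa D (Some i) P)" for T
  proof
    fix R assume R: "R \<in> set (unspine T)"
    have "\<not> contains T (lpa D (Some i) P)" and "tsize T = n"
      using T by (simp_all add: avoiders_def)
    then show "R \<in> ?S"
      using R not_contains_lpa_iff[OF assms(1), of T P] tsize_less_if_mem_unspine[OF R] by simp
  qed
  have "rotate_subtrees i j \<phi> ` avoiders n (lpa D (Some i) P) \<subseteq> avoiders n (lpa D (Some j) P)"
    using rotate_subtrees_in_avoiders[OF assms] subtrees \<phi> by blast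
  moreover have "inj_on (rotate_subtrees i j \<phi>) (avoiders n (lpa D (Some i) P))"
    by (rule inj_on_subset[OF inj_on_rotate_subtrees[OF \<phi>_inj]]) (use subtrees in blast)
  ultimately show ?case
    using card_inj_on_le[OF _ _ finite_avoiders] by blast
qed

theorem lemma18:
  fixes d i j :: nat and P :: pat
  assumes "i < d" and "j < d" and "i \<noteq> j"
  shows "wilf_equiv (lpa (d - 1) (Some i) P) (lpa (d - 1) (Some j) P)"
proof -
  have "i \<le> d - 1" and "j \<le> d - 1" using assms(1,2) by auto
  then have "card (avoiders n (lpa (d - 1) (Some i) P)) = card (avoiders n (lpa (d - 1) (Some j) P))"
    for n
    by (intro antisym card_avoiders_lpa_le)
  then show ?thesis unfolding wilf_equiv_def by blast
qed

end
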